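(* Let $\{\chi^{(n)}_{n-j}\}_{1\le j\le n}$, $n\ge1$, be positive numbers, and let $\sigma_{\min}\in[0,2)$. Define $\mathsf a^{(n)}_0:=(2-\sigma_{\min})\chi^{(n)}_0$ and $\mathsf a^{(n)}_{n-j}:=\chi^{(n)}_{n-j}$ for $1\le j\le n-1$, and assume that for every $n\ge2$: (row decrease) $\mathsf a^{(n)}_{n-j-1}\ge\mathsf a^{(n)}_{n-j}>0$ for $1\le j\le n-1$; (column decrease) $\mathsf a^{(n-1)}_{n-1-j}\ge\mathsf a^{(n)}_{n-j}$ for $1\le j\le n-1$; (algebraic convexity) $\mathsf a^{(n-1)}_{n-2-j}-\mathsf a^{(n-1)}_{n-1-j}\ge\mathsf a^{(n)}_{n-1-j}-\mathsf a^{(n)}_{n-j}$ for $1\le j\le n-2$. For a real sequence $(w_k)_{k\ge1}$ and $n\ge1$ define $$Y_n:=\sum_{j=1}^{n-1}\big(\mathsf a^{(n)}_{n-j-1}-\mathsf a^{(n)}_{n-j}\big)\Big(\sum_{\ell=j+1}^n w_\ell\Big)^2+\mathsf a^{(n)}_{n-1}\Big(\sum_{\ell=1}^n w_\ell\Big)^2,\qquad Y_0:=0,$$ and for $n\ge2$ $$R_n:=\sum_{j=1}^{n-2}\big(\mathsf a^{(n-1)}_{n-2-j}-\mathsf a^{(n-1)}_{n-1-j}-\mathsf a^{(n)}_{n-j-1}+\mathsf a^{(n)}_{n-j}\big)\Big(\sum_{\ell=j+1}^{n-1}w_\ell\Big)^2+\big(\mathsf a^{(n-1)}_{n-2}-\mathsf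 a^{(n)}_{n-1}\big)\Big(\sum_{\ell=1}^{n-1}w_\ell\Big)^2,$$ $R_1:=0$. Then $Y_n\ge0$, $R_n\ge0$, $$2w_n\sum_{j=1}^n\chi^{(n)}_{n-j}w_j=Y_n-Y_{n-1}+\sigma_{\min}\chi^{(n)}_0w_n^2+R_n\qquad\text{for } n\ge1,$$ and consequently $$2\sum_{k=1}^n w_k\sum_{j=1}^k\chi^{(k)}_{k-j}w_j\ge Y_n+\sigma_{\min}\sum_{k=1}^n\chi^{(k)}_0w_k^2\qquad\text{for } n\ge1.$$ *)

theory Defs
  imports Complex_Main
begin

text \<open>chi n k stands for the kernel coefficient chi^(n)_k (used for 0 <= k <= n-1).\<close>

definition acoef :: "(nat \<Rightarrow> nat \<Rightarrow> real) \<Rightarrow> real \<Rightarrow> nat \<Rightarrow> nat \<Rightarrow> real" where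
  "acoef chi \<sigma> n k = (if k = 0 then (2 - \<sigma>) * chi n 0 else chi n k)"

definition Yfun :: "(nat \<Rightarrow> nat \<Rightarrow> real) \<Rightarrow> real \<Rightarrow> (nat \<Rightarrow> real) \<Rightarrow> nat \<Rightarrow> real" where
  "Yfun chi \<sigma> w n = (if n = 0 then 0 else
     (\<Sum>j=1..n-1. (acoef chi \<sigma> n (n-j-1) - acoef chi \<sigma> n (n-j)) * (\<Sum>l=j+1..n. w l)^2)
     + acoef chi \<sigma> n (n-1) * (\<Sum>l=1..n. w l)^2)"

definition Rfun :: "(nat \<Rightarrow> nat \<Rightarrow> real) \<Rightarrow> real \<Rightarrow> (nat \<Rightarrow> real) \<Rightarrow> nat \<Rightarrow> real" where
  "Rfun chi \<sigma> w n = (if n \<le> 1 then 0 else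
     (\<Sum>j=1..n-2. (acoef chi \<sigma> (n-1) (n-2-j) - acoef chi \<sigma> (n-1) (n-1-j)
                    - acoef chi \<sigma> n (n-j-1) + acoef chi \<sigma> n (n-j)) * (\<Sum>l=j+1..n-1. w l)^2)
     + (acoef chi \<sigma> (n-1) (n-2) - acoef chi \<sigma> n (n-1)) * (\<Sum>l=1..n-1. w l)^2)"

end

theory Submission
  imports Defs
begin

(*
  Write the row a^(n) through its increments c_1 = a_{n-1}, c_j = a_{n-j} - a_{n-j+1},
  so that c_1 + ... + c_l = a_{n-l}.  Then Y_n = sum_j c^(n)_j (w_j + ... + w_n)^2 and
  R_n = sum_j (c^(n-1)_j - c^(n)_j) (w_j + ... + w_{n-1})^2.  Row decrease makes the
  increments nonnegative, column decrease and convexity make them decrease in n, so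
  Y_n, R_n >= 0.  Splitting w_n off the tail sums and summing by parts yields the
  identity, and summing the identity over n telescopes to the inequality.
*)

lemma sum_atLeast1_Suc_split:
  "(\<Sum>j=1..Suc k. f j) = f 1 + (\<Sum>j=1..k. f (j+1))"
  by (simp add: sum.atLeast_Suc_atMost sum.shift_bounds_cl_Suc_ivl del: sum.cl_ivl_Suc)

lemma sum_mult_tail_sum:
  fixes c x :: "nat \<Rightarrow> 'a::comm_ring_1"
  shows "(\<Sum>j=1..m. c j * (\<Sum>l=j..m. x l)) = (\<Sum>l=1..m. x l * (\<Sum>j=1..l. c j))"
proof (induction m)
  case (Suc m)
  have "(\<Sum>j=1..Suc m. c j * (\<Sum>l=j..Suc m. x l))
      = (\<Sum>j=1..m. c j * (\<Sum>l=j..m. x l) + c j * x (Suc m)) + c (Suc m) * x (Suc m)"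
    by (simp add: distrib_left)
  also have "\<dots> = (\<Sum>l=1..m. x l * (\<Sum>j=1..l. c j)) + (\<Sum>j=1..m. c j) * x (Suc m)
                    + c (Suc m) * x (Suc m)"
    by (simp only: sum.distrib Suc.IH sum_distrib_right)
  finally show ?case
    by (simp add: algebra_simps)
qed simp

lemma sum_mult_tail_sum_square_Suc:
  fixes c x :: "nat \<Rightarrow> 'a::comm_ring_1"
  shows "(\<Sum>j=1..Suc m. c j * (\<Sum>l=j..Suc m. x l)^2)
       = (\<Sum>j=1..m. c j * (\<Sum>l=j..m. x l)^2) + (\<Sum>j=1..Suc m. c j) * x (Suc m)^2
         + 2 * x (Suc m) * (\<Sum>l=1..m. x l * (\<Sum>j=1..l. c j))"
proof -
  have "(\<Sum>j=1..Suc m. c j * (\<Sum>l=j..Suc m. x l)^2)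
     = (\<Sum>j=1..m. c j * (\<Sum>l=j..m. x l)^2 + c j * x (Suc m)^2
                  + 2 * x (Suc m) * (c j * (\<Sum>l=j..m. x l))) + c (Suc m) * x (Suc m)^2"
    by (simp add: power2_eq_square algebra_simps)
  also have "\<dots> = (\<Sum>j=1..m. c j * (\<Sum>l=j..m. x l)^2) + (\<Sum>j=1..m. c j) * x (Suc m)^2
      + 2 * x (Suc m) * (\<Sum>j=1..m. c j * (\<Sum>l=j..m. x l)) + c (Suc m) * x (Suc m)^2"
    by (simp only: sum.distrib sum_distrib_left sum_distrib_right)
  finally show ?thesis
    unfolding sum_mult_tail_sum by (simp add: algebra_simps)
qed

definition tail_weight :: "(nat \<Rightarrow> real) \<Rightarrow> nat \<Rightarrow> nat \<Rightarrow> real" where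
  "tail_weight a n j = (if j = 1 then a (n-1) else a (n-j) - a (n-j+1))"

lemma sum_tail_weight:
  assumes "1 \<le> l" "l \<le> n"
  shows "(\<Sum>j=1..l. tail_weight a n j) = a (n-l)"
  using assms
proof (induction l)
  case 0
  then show ?case by simp
next
  case (Suc l)
  then show ?case
    by (cases "l = 0") (simp_all add: tail_weight_def Suc_diff_Suc)
qed

lemma tail_weight_nonneg:
  assumes "0 \<le> a (n-1)" and "\<forall>i\<in>{1..n-1}. a (n-i) \<le> a (n-i-1)"
    and "j \<in> {1..n}"
  shows "0 \<le> tail_weight a n j"
proof (cases "j = 1")
  case False
  with assms(3) have "j - 1 \<in> {1..n-1}" "n - (j-1) - 1 = n - j" "n - (j-1) = n - j + 1"
    by auto
  with assms(2) False show ?thesis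
    by (metis diff_ge_0_iff_ge tail_weight_def)
qed (use assms(1) in \<open>simp add: tail_weight_def\<close>)

lemma tail_weight_antimono:
  assumes "a (n-1) \<le> b (n-2)"
    and "\<forall>i\<in>{1..n-2}. a (n-1-i) - a (n-i) \<le> b (n-2-i) - b (n-1-i)"
    and "j \<in> {1..n-1}"
  shows "tail_weight a n j \<le> tail_weight b (n-1) j"
proof (cases "j = 1")
  case False
  with assms(3) have "j - 1 \<in> {1..n-2}"
    and "n-1-(j-1) = n-j" "n-(j-1) = n-j+1" "n-2-(j-1) = n-1-j" "n-1-(j-1) = n-1-j+1"
    by auto
  with assms(2) False show ?thesis
    by (metis tail_weight_def)
qed (use assms(1) in \<open>simp add: tail_weight_def numeral_2_eq_2\<close>)

lemma tail_weight_form_Suc: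
  "(\<Sum>j=1..Suc m. tail_weight a (Suc m) j * (\<Sum>l=j..Suc m. x l)^2)
     = (\<Sum>j=1..m. tail_weight a (Suc m) j * (\<Sum>l=j..m. x l)^2) + a 0 * x (Suc m)^2
       + 2 * x (Suc m) * (\<Sum>l=1..m. a (Suc m - l) * x l)"
proof -
  have "(\<Sum>l=1..m. x l * (\<Sum>j=1..l. tail_weight a (Suc m) j)) = (\<Sum>l=1..m. a (Suc m - l) * x l)"
  proof (rule sum.cong)
    fix l
    assume "l \<in> {1..m}"
    then show "x l * (\<Sum>j=1..l. tail_weight a (Suc m) j) = a (Suc m - l) * x l"
      by (subst sum_tail_weight) auto
  qed simp
  moreover have "(\<Sum>j=1..Suc m. tail_weight a (Suc m) j) = a 0"
    using sum_tail_weight[of "Suc m" "Suc m" a] by simp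
  ultimately show ?thesis
    unfolding sum_mult_tail_sum_square_Suc by simp
qed

lemma Yfun_eq_tail_weight_form:
  "Yfun chi \<sigma> w n = (\<Sum>j=1..n. tail_weight (acoef chi \<sigma> n) n j * (\<Sum>l=j..n. w l)^2)"
proof (cases n)
  case (Suc k)
  have "(\<Sum>j=1..n. tail_weight (acoef chi \<sigma> n) n j * (\<Sum>l=j..n. w l)^2)
     = tail_weight (acoef chi \<sigma> n) n 1 * (\<Sum>l=1..n. w l)^2
       + (\<Sum>j=1..n-1. tail_weight (acoef chi \<sigma> n) n (j+1) * (\<Sum>l=j+1..n. w l)^2)"
    unfolding Suc diff_Suc_1 by (rule sum_atLeast1_Suc_split)
  also have "(\<Sum>j=1..n-1. tail_weight (acoef chi \<sigma> n) n (j+1) * (\<Sum>l=j+1..n. w l)^2)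
     = (\<Sum>j=1..n-1. (acoef chi \<sigma> n (n-j-1) - acoef chi \<sigma> n (n-j)) * (\<Sum>l=j+1..n. w l)^2)"
    by (rule sum.cong) (auto simp: tail_weight_def Suc Suc_diff_Suc Suc_diff_le simp del: sum.cl_ivl_Suc)
  finally show ?thesis
    by (simp add: Yfun_def tail_weight_def Suc del: sum.cl_ivl_Suc)
qed (simp add: Yfun_def)

lemma Rfun_eq_tail_weight_form:
  "Rfun chi \<sigma> w n = (\<Sum>j=1..n-1. (tail_weight (acoef chi \<sigma> (n-1)) (n-1) j
                                     - tail_weight (acoef chi \<sigma> n) n j) * (\<Sum>l=j..n-1. w l)^2)"
proof (cases "n \<le> 1")
  case False
  then obtain k where k: "n = Suc (Suc k)"
    by (cases n; cases "n - 1") auto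
  let ?d = "\<lambda>j. tail_weight (acoef chi \<sigma> (n-1)) (n-1) j - tail_weight (acoef chi \<sigma> n) n j"
  have "(\<Sum>j=1..n-1. ?d j * (\<Sum>l=j..n-1. w l)^2)
     = ?d 1 * (\<Sum>l=1..n-1. w l)^2 + (\<Sum>j=1..n-2. ?d (j+1) * (\<Sum>l=j+1..n-1. w l)^2)"
    unfolding k diff_Suc_1 diff_Suc_Suc diff_zero numeral_2_eq_2 by (rule sum_atLeast1_Suc_split)
  also have "(\<Sum>j=1..n-2. ?d (j+1) * (\<Sum>l=j+1..n-1. w l)^2)
     = (\<Sum>j=1..n-2. (acoef chi \<sigma> (n-1) (n-2-j) - acoef chi \<sigma> (n-1) (n-1-j)
                    - acoef chi \<sigma> n (n-j-1) + acoef chi \<sigma> n (n-j)) * (\<Sum>l=j+1..n-1. w l)^2)"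
    by (rule sum.cong) (auto simp: tail_weight_def Suc_diff_Suc Suc_diff_le simp del: sum.cl_ivl_Suc)
  also have "?d 1 = acoef chi \<sigma> (n-1) (n-2) - acoef chi \<sigma> n (n-1)"
    by (simp add: tail_weight_def k)
  finally show ?thesis
    using False unfolding Rfun_def by (simp only: if_False add.commute)
qed (auto simp: Rfun_def)

lemma Yfun_nonneg:
  assumes "0 \<le> acoef chi \<sigma> n (n-1)"
    and "\<forall>j\<in>{1..n-1}. acoef chi \<sigma> n (n-j) \<le> acoef chi \<sigma> n (n-j-1)"
  shows "0 \<le> Yfun chi \<sigma> w n"
  unfolding Yfun_eq_tail_weight_form using assms
  by (intro sum_nonneg mult_nonneg_nonneg tail_weight_nonneg) auto

lemma Rfun_nonneg:
  assumes "acoef chi \<sigma> n (n-1) \<le> acoef chi \<sigma> (n-1) (n-2)"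
    and "\<forall>j\<in>{1..n-2}. acoef chi \<sigma> n (n-1-j) - acoef chi \<sigma> n (n-j)
                     \<le> acoef chi \<sigma> (n-1) (n-2-j) - acoef chi \<sigma> (n-1) (n-1-j)"
  shows "0 \<le> Rfun chi \<sigma> w n"
  unfolding Rfun_eq_tail_weight_form using tail_weight_antimono[OF assms]
  by (intro sum_nonneg mult_nonneg_nonneg) auto

lemma energy_identity:
  assumes "1 \<le> n"
  shows "2 * w n * (\<Sum>j=1..n. chi n (n-j) * w j)
           = Yfun chi \<sigma> w n - Yfun chi \<sigma> w (n-1) + \<sigma> * chi n 0 * (w n)^2 + Rfun chi \<sigma> w n"
proof -
  obtain m where n: "n = Suc m"
    using assms by (cases n) auto
  have "Yfun chi \<sigma> w n - Yfun chi \<sigma> w (n-1) + Rfun chi \<sigma> w n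
      = acoef chi \<sigma> n 0 * w n ^ 2 + 2 * w n * (\<Sum>l=1..m. acoef chi \<sigma> n (n-l) * w l)"
    unfolding Yfun_eq_tail_weight_form Rfun_eq_tail_weight_form n diff_Suc_1 tail_weight_form_Suc
    by (simp add: sum_subtractf algebra_simps del: sum.cl_ivl_Suc)
  also have "(\<Sum>l=1..m. acoef chi \<sigma> n (n-l) * w l) = (\<Sum>l=1..m. chi n (n-l) * w l)"
    by (rule sum.cong) (auto simp: acoef_def n)
  finally show ?thesis
    by (simp add: n acoef_def algebra_simps power2_eq_square)
qed

lemma energy_sum_ge:
  assumes "\<And>k. 1 \<le> k \<Longrightarrow> 0 \<le> Rfun chi \<sigma> w k"
  shows "Yfun chi \<sigma> w n + \<sigma> * (\<Sum>k=1..n. chi k 0 * (w k)^2)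
           \<le> 2 * (\<Sum>k=1..n. w k * (\<Sum>j=1..k. chi k (k-j) * w j))"
proof (induction n)
  case 0
  then show ?case by (simp add: Yfun_def)
next
  case (Suc n)
  have "2 * (\<Sum>k=1..Suc n. w k * (\<Sum>j=1..k. chi k (k-j) * w j))
      = 2 * (\<Sum>k=1..n. w k * (\<Sum>j=1..k. chi k (k-j) * w j))
        + (Yfun chi \<sigma> w (Suc n) - Yfun chi \<sigma> w n + \<sigma> * chi (Suc n) 0 * (w (Suc n))^2
           + Rfun chi \<sigma> w (Suc n))"
    using energy_identity[of "Suc n" w chi \<sigma>] by (simp add: algebra_simps)
  then show ?case
    using Suc.IH assms[of "Suc n"] by (simp add: algebra_simps)
qed

theorem lemma2p3:
  fixes chi :: "nat \<Rightarrow> nat \<Rightarrow> real" and \<sigma> :: real and w :: "nat \<Rightarrow> real"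
  assumes pos: "\<forall>n\<ge>1. \<forall>j\<in>{1..n}. chi n (n-j) > 0"
    and sig: "0 \<le> \<sigma>" "\<sigma> < 2"
    and row: "\<forall>n\<ge>2. \<forall>j\<in>{1..n-1}.
                 acoef chi \<sigma> n (n-j-1) \<ge> acoef chi \<sigma> n (n-j) \<and> acoef chi \<sigma> n (n-j) > 0"
    and col: "\<forall>n\<ge>2. \<forall>j\<in>{1..n-1}. acoef chi \<sigma> (n-1) (n-1-j) \<ge> acoef chi \<sigma> n (n-j)"
    and conv: "\<forall>n\<ge>2. \<forall>j\<in>{1..n-2}.
                 acoef chi \<sigma> (n-1) (n-2-j) - acoef chi \<sigma> (n-1) (n-1-j)
                   \<ge> acoef chi \<sigma> n (n-1-j) - acoef chi \<sigma> n (n-j)"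
  shows "\<forall>n\<ge>1. Yfun chi \<sigma> w n \<ge> 0 \<and> Rfun chi \<sigma> w n \<ge> 0
           \<and> 2 * w n * (\<Sum>j=1..n. chi n (n-j) * w j)
               = Yfun chi \<sigma> w n - Yfun chi \<sigma> w (n-1) + \<sigma> * chi n 0 * (w n)^2 + Rfun chi \<sigma> w n
           \<and> 2 * (\<Sum>k=1..n. w k * (\<Sum>j=1..k. chi k (k-j) * w j))
               \<ge> Yfun chi \<sigma> w n + \<sigma> * (\<Sum>k=1..n. chi k 0 * (w k)^2)"
proof -
  have Y_nonneg: "0 \<le> Yfun chi \<sigma> w n" if "1 \<le> n" for n
  proof (rule Yfun_nonneg)
    show "0 \<le> acoef chi \<sigma> n (n-1)"
    proof (cases "n = 1")
      case True
      with pos sig show ?thesis by (auto simp: acoef_def)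
    next
      case False
      with that row[rule_format, of n 1] show ?thesis by fastforce
    qed
    show "\<forall>j\<in>{1..n-1}. acoef chi \<sigma> n (n-j) \<le> acoef chi \<sigma> n (n-j-1)"
      using row by (cases "2 \<le> n") auto
  qed
  have R_nonneg: "0 \<le> Rfun chi \<sigma> w n" for n
  proof (cases "2 \<le> n")
    case True
    with col[rule_format, of n 1] conv show ?thesis
      by (intro Rfun_nonneg) (auto simp: numeral_2_eq_2)
  qed (simp add: Rfun_def)
  show ?thesis
    using Y_nonneg R_nonneg energy_identity energy_sum_ge by blast
qed

end
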